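(* Let $K$ be a global field of positive characteristic, $\nu$ a place of $K$, $\mathbb{G}$ a $K$-group, $G=\mathbb{G}(K_\nu)$, $\Gamma$ a discrete subgroup (an arithmetic lattice commensurable with $\mathbb{G}(\mathcal{O}_{\{\nu\}})$), $\mathbb{F}$ a connected $K$-closed subgroup of $\mathbb{G}$ without $K$-rational characters, $F=\mathbb{F}(K_\nu)$ and $\Gamma_F=\Gamma\cap N_G(F)$. Let $D\subset G$ be compact and let $\mathcal{Y}$ be the set of $(F,\Gamma)$-self-intersection points of $D$. Then for every compact subset $D'\subset D\setminus\mathcal{Y}$ there is an open neighbourhood $\Omega$ of $D'$ in $G$ that has no $(F,\Gamma)$-self-intersection points, i.e. there are no $g\in\Omega$ and $\gamma\in\Gamma\setminus\Gamma_F$ with $g\gamma\in\Omega$.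
   Context: For $A\subset G$, a point $x\in A$ is an $(F,\Gamma)$-self-intersection point of $A$ if there exists $\gamma\in\Gamma\setminus\Gamma_F$ with $x\gamma\in A$. *)

theory Defs
  imports "HOL-Analysis.Analysis"
begin

(* Abstract setting: G is an (additively written, possibly non-commutative)
   Hausdorff, locally compact topological group; group law x\<gamma> is written x + \<gamma>. *)

definition subgrp :: "'a::group_add set \<Rightarrow> bool" where
  "subgrp H \<longleftrightarrow> 0 \<in> H \<and> (\<forall>x\<in>H. \<forall>y\<in>H. x + y \<in> H) \<and> (\<forall>x\<in>H. - x \<in> H)"

definition normalizer :: "'a::group_add set \<Rightarrow> 'a set" where
  "normalizer F = {g. (\<lambda>f. g + f + - g) ` F = F}"

definition discrete_subgrp :: "'a::{group_add,topological_space} set \<Rightarrow> bool" where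
  "discrete_subgrp \<Gamma> \<longleftrightarrow> subgrp \<Gamma> \<and> (\<forall>\<gamma>\<in>\<Gamma>. \<exists>U. open U \<and> U \<inter> \<Gamma> = {\<gamma>})"

definition Gamma_F :: "'a::group_add set \<Rightarrow> 'a set \<Rightarrow> 'a set" where
  "Gamma_F F \<Gamma> = \<Gamma> \<inter> normalizer F"

definition self_int_point :: "'a::group_add set \<Rightarrow> 'a set \<Rightarrow> 'a set \<Rightarrow> 'a \<Rightarrow> bool" where
  "self_int_point F \<Gamma> A x \<longleftrightarrow> x \<in> A \<and> (\<exists>\<gamma>\<in>\<Gamma> - Gamma_F F \<Gamma>. x + \<gamma> \<in> A)"

end

theory Submission
  imports Defs
begin

text \<open>Only finitely many elements of the discrete subgroup \<open>\<Gamma>\<close> can move a point of a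
  relatively compact neighbourhood \<open>V\<close> of \<open>D'\<close> back into \<open>V\<close>, since they lie in the compact
  set \<open>-L + L\<close> for a compact \<open>L \<supseteq> V\<close>. For each of these finitely many \<open>\<gamma>\<close> the compact
  sets \<open>D'\<close> and \<open>D' + \<gamma>\<close> are disjoint, because \<open>D'\<close> contains no self-intersection points,
  and Hausdorff separation gives an open \<open>W\<^sub>\<gamma> \<supseteq> D'\<close> with \<open>W\<^sub>\<gamma> \<inter> (W\<^sub>\<gamma> - \<gamma>) = {}\<close>.
  The intersection of \<open>V\<close> with these finitely many \<open>W\<^sub>\<gamma>\<close> is the required \<open>\<Omega>\<close>.\<close>

lemma Hausdorff_space_euclidean_t2: "Hausdorff_space (euclidean :: 'a::t2_space topology)"
  unfolding Hausdorff_space_def disjnt_def by (simp add: separation_t2)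

lemma nhd_zero_minus_add_subset:
  fixes U :: "'a::topological_group_add set"
  assumes "open U" "0 \<in> U"
  obtains W where "open W" "0 \<in> W" "\<And>x y. x \<in> W \<Longrightarrow> y \<in> W \<Longrightarrow> - x + y \<in> U"
proof -
  have "((\<lambda>z. - fst z + snd z) \<longlongrightarrow> - fst (0::'a, 0::'a) + snd (0::'a, 0::'a)) (nhds (0, 0))"
    by (intro tendsto_intros) (simp_all add: filterlim_ident)
  hence "((\<lambda>z::'a\<times>'a. - fst z + snd z) \<longlongrightarrow> 0) (nhds (0, 0))" by simp
  hence "eventually (\<lambda>z::'a\<times>'a. - fst z + snd z \<in> U) (nhds (0, 0))"
    by (rule topological_tendstoD[OF _ assms])
  hence "eventually (\<lambda>z::'a\<times>'a. - fst z + snd z \<in> U) (nhds 0 \<times>\<^sub>F nhds 0)"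
    by (simp add: nhds_prod)
  hence "\<exists>Q. eventually Q (nhds 0) \<and> (\<forall>x y. Q x \<longrightarrow> Q y \<longrightarrow> - x + y \<in> U)"
    by (simp only: eventually_prod_same fst_conv snd_conv)
  then obtain Q where Q: "eventually Q (nhds 0)" "\<And>x y. Q x \<Longrightarrow> Q y \<Longrightarrow> - x + y \<in> U"
    by blast
  from Q(1) obtain W where "open W" "0 \<in> W" "\<forall>x\<in>W. Q x"
    unfolding eventually_nhds by blast
  thus ?thesis using that Q(2) by blast
qed

lemma discrete_subgrp_Int_compact_finite:
  fixes \<Gamma> K :: "'a::topological_group_add set"
  assumes "discrete_subgrp \<Gamma>" "compact K"
  shows "finite (\<Gamma> \<inter> K)"
proof -
  have sg: "subgrp \<Gamma>" using assms(1) by (simp add: discrete_subgrp_def)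
  then obtain U where U: "open U" "U \<inter> \<Gamma> = {0}"
    using assms(1) by (auto simp: discrete_subgrp_def subgrp_def)
  obtain W where W: "open W" "0 \<in> W" "\<And>x y. x \<in> W \<Longrightarrow> y \<in> W \<Longrightarrow> - x + y \<in> U"
    using nhd_zero_minus_add_subset[OF U(1)] U(2) by blast
  define T where "T p = (\<lambda>v. - p + v) -` W" for p
  have "\<And>p. p \<in> K \<Longrightarrow> open (T p)"
    unfolding T_def by (rule open_vimage[OF W(1)]) (intro continuous_intros)
  moreover have "K \<subseteq> (\<Union>p\<in>K. T p)" using W(2) by (force simp: T_def)
  ultimately obtain P where P: "P \<subseteq> K" "finite P" "K \<subseteq> (\<Union>p\<in>P. T p)"
    by (rule compactE_image[OF assms(2)])
  have "a = b" if "a \<in> \<Gamma> \<inter> T p" "b \<in> \<Gamma> \<inter> T p" for a b p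
  proof -
    have "- p + a \<in> W" "- p + b \<in> W" using that by (auto simp: T_def)
    hence "- (- p + a) + (- p + b) \<in> U" by (rule W(3))
    hence "- a + b \<in> U" by (simp add: minus_add add.assoc)
    moreover have "- a + b \<in> \<Gamma>" using sg that unfolding subgrp_def by blast
    ultimately have "- a + b = 0" using U(2) by blast
    thus "a = b" by (metis add.right_neutral add_minus_cancel)
  qed
  hence "\<Gamma> \<inter> T p = {} \<or> (\<exists>a. \<Gamma> \<inter> T p = {a})" for p by blast
  hence "finite (\<Gamma> \<inter> T p)" for p by (metis finite.emptyI finite.insertI)
  hence "finite (\<Union>p\<in>P. \<Gamma> \<inter> T p)" using P(2) by blast
  moreover have "\<Gamma> \<inter> K \<subseteq> (\<Union>p\<in>P. \<Gamma> \<inter> T p)" using P(3) by blast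
  ultimately show ?thesis by (rule finite_subset[rotated])
qed

lemma open_nhd_avoiding_translate:
  fixes C :: "'a::{topological_group_add, t2_space} set"
  assumes "compact C" "\<And>x. x \<in> C \<Longrightarrow> x + \<gamma> \<notin> C"
  obtains W where "open W" "C \<subseteq> W" "\<And>g. g \<in> W \<Longrightarrow> g + \<gamma> \<notin> W"
proof -
  have "compactin euclidean C" using assms(1) by (simp add: compactin_euclidean_iff)
  moreover have "compactin euclidean ((\<lambda>x. x + \<gamma>) ` C)"
    unfolding compactin_euclidean_iff by (intro compact_continuous_image assms(1) continuous_intros)
  moreover have "disjnt C ((\<lambda>x. x + \<gamma>) ` C)"
    using assms(2) by (auto simp: disjnt_def)
  ultimately obtain A B where "openin euclidean A" "openin euclidean B"
    "C \<subseteq> A" "(\<lambda>x. x + \<gamma>) ` C \<subseteq> B" "disjnt A B"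
    by (rule Hausdorff_space_compact_separation[OF Hausdorff_space_euclidean_t2])
  hence AB: "open A" "open B" "C \<subseteq> A" "(\<lambda>x. x + \<gamma>) ` C \<subseteq> B" "A \<inter> B = {}"
    by (auto simp: disjnt_def)
  show ?thesis
  proof
    show "open (A \<inter> (\<lambda>g. g + \<gamma>) -` B)"
      by (intro open_Int AB(1) open_vimage[OF AB(2)] continuous_intros)
    show "C \<subseteq> A \<inter> (\<lambda>g. g + \<gamma>) -` B" using AB(3,4) by auto
    show "g + \<gamma> \<notin> A \<inter> (\<lambda>g. g + \<gamma>) -` B" if "g \<in> A \<inter> (\<lambda>g. g + \<gamma>) -` B" for g
      using that AB(5) by auto
  qed
qed

lemma compact_open_subset_compact:
  fixes C :: "'a::t2_space set"
  assumes "locally_compact_space (euclidean :: 'a topology)" "compact C"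
  obtains V L where "open V" "compact L" "C \<subseteq> V" "V \<subseteq> L"
  using assms locally_compact_space_compact_closed_compact[OF disjI1[OF Hausdorff_space_euclidean_t2]]
  by (auto simp: compactin_euclidean_iff)

lemma open_nhd_avoiding_discrete_translates:
  fixes \<Gamma> S C :: "'a::{topological_group_add, t2_space} set"
  assumes "locally_compact_space (euclidean :: 'a topology)" "discrete_subgrp \<Gamma>" "S \<subseteq> \<Gamma>"
    and "compact C" "\<And>x \<gamma>. x \<in> C \<Longrightarrow> \<gamma> \<in> S \<Longrightarrow> x + \<gamma> \<notin> C"
  obtains \<Omega> where "open \<Omega>" "C \<subseteq> \<Omega>" "\<And>g \<gamma>. g \<in> \<Omega> \<Longrightarrow> \<gamma> \<in> S \<Longrightarrow> g + \<gamma> \<notin> \<Omega>"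
proof -
  obtain V L where VL: "open V" "compact L" "C \<subseteq> V" "V \<subseteq> L"
    using compact_open_subset_compact[OF assms(1,4)] .
  define K where "K = (\<lambda>z. - fst z + snd z) ` (L \<times> L)"
  have "compact K"
    unfolding K_def by (intro compact_continuous_image compact_Times VL(2) continuous_intros)
  hence "finite (\<Gamma> \<inter> K)" by (rule discrete_subgrp_Int_compact_finite[OF assms(2)])
  moreover have "S \<inter> K \<subseteq> \<Gamma> \<inter> K" using assms(3) by blast
  ultimately have fin: "finite (S \<inter> K)" by (rule finite_subset[rotated])
  have "\<forall>\<gamma>\<in>S \<inter> K. \<exists>W. open W \<and> C \<subseteq> W \<and> (\<forall>g\<in>W. g + \<gamma> \<notin> W)"
  proof
    fix \<gamma> assume "\<gamma> \<in> S \<inter> K"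
    then obtain W where "open W" "C \<subseteq> W" "\<And>g. g \<in> W \<Longrightarrow> g + \<gamma> \<notin> W"
      using open_nhd_avoiding_translate[OF assms(4), of \<gamma>] assms(5) by blast
    thus "\<exists>W. open W \<and> C \<subseteq> W \<and> (\<forall>g\<in>W. g + \<gamma> \<notin> W)" by blast
  qed
  then obtain W where W: "\<forall>\<gamma>\<in>S \<inter> K. open (W \<gamma>) \<and> C \<subseteq> W \<gamma> \<and> (\<forall>g\<in>W \<gamma>. g + \<gamma> \<notin> W \<gamma>)"
    by (rule bchoice[elim_format]) blast
  show ?thesis
  proof
    show "open (V \<inter> \<Inter> (W ` (S \<inter> K)))" using W by (intro open_Int open_INT VL(1) fin) blast
    show "C \<subseteq> V \<inter> \<Inter> (W ` (S \<inter> K))" using VL(3) W by blast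
    fix g \<gamma> assume g: "g \<in> V \<inter> \<Inter> (W ` (S \<inter> K))" and "\<gamma> \<in> S"
    show "g + \<gamma> \<notin> V \<inter> \<Inter> (W ` (S \<inter> K))"
    proof
      assume g\<gamma>: "g + \<gamma> \<in> V \<inter> \<Inter> (W ` (S \<inter> K))"
      have "(g, g + \<gamma>) \<in> L \<times> L" using g g\<gamma> VL(4) by blast
      hence "\<gamma> \<in> K" unfolding K_def by (rule rev_image_eqI) (simp add: add.assoc[symmetric])
      with \<open>\<gamma> \<in> S\<close> g g\<gamma> W show False by blast
    qed
  qed
qed

theorem proposition5p9:
  fixes F \<Gamma> D D' :: "'a::{topological_group_add, t2_space} set"
  assumes "locally_compact_space (euclidean :: 'a topology)"
    and "discrete_subgrp \<Gamma>"
    and "subgrp F" and "closed F"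
    and "compact D"
    and "compact D'"
    and "D' \<subseteq> D - {x. self_int_point F \<Gamma> D x}"
  shows "\<exists>\<Omega>. open \<Omega> \<and> D' \<subseteq> \<Omega> \<and>
           \<not> (\<exists>g\<in>\<Omega>. \<exists>\<gamma>\<in>\<Gamma> - Gamma_F F \<Gamma>. g + \<gamma> \<in> \<Omega>)"
proof -
  have no_self_int: "x + \<gamma> \<notin> D'" if "x \<in> D'" "\<gamma> \<in> \<Gamma> - Gamma_F F \<Gamma>" for x \<gamma>
    using that assms(7) unfolding self_int_point_def by blast
  obtain \<Omega> where "open \<Omega>" "D' \<subseteq> \<Omega>" "\<And>g \<gamma>. g \<in> \<Omega> \<Longrightarrow> \<gamma> \<in> \<Gamma> - Gamma_F F \<Gamma> \<Longrightarrow> g + \<gamma> \<notin> \<Omega>"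
    using open_nhd_avoiding_discrete_translates[OF assms(1,2) Diff_subset assms(6) no_self_int] by blast
  thus ?thesis by blast
qed

end
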